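(* For every positive integer $n$ there exist a line $\ell$ in $\mathbb{R}^3$ and a finite family of convex polytopes in $\mathbb{R}^3$ of size at least $n$ that is a minimal pinning of $\ell$.
   Context: A line $\ell$ is a transversal to a family $\mathcal{F}$ of convex polytopes if it intersects every member of $\mathcal{F}$. $\mathcal{F}$ pins $\ell$ if $\ell$ is a transversal to $\mathcal{F}$ and $\ell$ is an isolated point of the space of line transversals to $\mathcal{F}$ (in the space of lines with its usual topology). $\mathcal{F}$ is a minimal pinning of $\ell$ if it pins $\ell$ and no proper subfamily of $\mathcal{F}$ pins $\ell$. (The polytopes are allowed to intersect each other and to have facets coplanar with $\ell$.) *)

theory Defs
  imports "HOL-Analysis.Analysis"
begin

definition line_of :: "real^3 \<Rightarrow> real^3 \<Rightarrow> (real^3) set" where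
  "line_of p d = {p + t *\<^sub>R d | t. True}"

definition is_line :: "(real^3) set \<Rightarrow> bool" where
  "is_line L \<longleftrightarrow> (\<exists>p d. d \<noteq> 0 \<and> L = line_of p d)"

text \<open>Usual topology on the space of lines: the quotient topology from the
  parametrisation (p,d) with d nonzero.\<close>

definition open_lines :: "(real^3) set set \<Rightarrow> bool" where
  "open_lines V \<longleftrightarrow> (\<forall>L\<in>V. is_line L) \<and>
     open {(p, d). d \<noteq> 0 \<and> line_of p d \<in> V}"

definition line_transversal :: "(real^3) set \<Rightarrow> (real^3) set set \<Rightarrow> bool" where
  "line_transversal L F \<longleftrightarrow> is_line L \<and> (\<forall>P\<in>F. L \<inter> P \<noteq> {})"

definition pins :: "(real^3) set set \<Rightarrow> (real^3) set \<Rightarrow> bool" where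
  "pins F L \<longleftrightarrow> line_transversal L F \<and>
     (\<exists>V. open_lines V \<and> L \<in> V \<and> (\<forall>M\<in>V. line_transversal M F \<longrightarrow> M = L))"

definition minimal_pinning :: "(real^3) set set \<Rightarrow> (real^3) set \<Rightarrow> bool" where
  "minimal_pinning F L \<longleftrightarrow> pins F L \<and> (\<forall>G. G \<subset> F \<longrightarrow> \<not> pins G L)"

end

theory Submission
  imports Defs
begin

text \<open>Near the x-axis every line is the graph \<open>x \<mapsto> (x, y0 + x dy, z0 + x dz)\<close>. The segment on the
  z-axis and the segment through \<open>(1,0,0)\<close> parallel to the y-axis force \<open>y0 = 0\<close> and \<open>z0 = -dz\<close>.
  A prism over a triangle lying in the half-plane \<open>n1 y + n2 z \<ge> 0\<close> with an edge on its boundary line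
  can only be met by such a line if \<open>n1 y + n2 z \<ge> 0\<close> at one of the two end slices of the prism.
  Three prisms give \<open>0 \<le> dz \<le> dy \<le> N dz\<close>, and for \<open>k = 1..N\<close> a further prism excludes
  \<open>(k - 1) dz < dy < (k + 1) dz\<close>; these excluded intervals cover \<open>[dz, N dz]\<close> unless \<open>dz = 0\<close>,
  so the x-axis is the only transversal nearby. Conversely, for every member there is a line meeting
  all other members well inside their triangles; scaling it towards the x-axis keeps it transversal
  to them, so no proper subfamily isolates the axis.\<close>

definition vec3 :: "real \<Rightarrow> real \<Rightarrow> real \<Rightarrow> real^3" where
  "vec3 x y z = vector [x, y, z]"

lemma vec3_nth [simp]: "vec3 x y z $ 1 = x" "vec3 x y z $ 2 = y" "vec3 x y z $ 3 = z"
  by (simp_all add: vec3_def)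

lemma vec3_eq_iff: "(v::real^3) = w \<longleftrightarrow> v$1 = w$1 \<and> v$2 = w$2 \<and> v$3 = w$3"
  by (simp add: vec_eq_iff forall_3)

lemma vec3_add [simp]: "vec3 x y z + vec3 x' y' z' = vec3 (x + x') (y + y') (z + z')"
  by (simp add: vec3_eq_iff)

lemma vec3_diff [simp]: "vec3 x y z - vec3 x' y' z' = vec3 (x - x') (y - y') (z - z')"
  by (simp add: vec3_eq_iff)

lemma vec3_uminus [simp]: "- vec3 x y z = vec3 (- x) (- y) (- z)"
  by (simp add: vec3_eq_iff)

lemma vec3_scaleR [simp]: "c *\<^sub>R vec3 x y z = vec3 (c * x) (c * y) (c * z)"
  by (simp add: vec3_eq_iff)

lemma vec3_eq_vec3_iff [simp]: "vec3 x y z = vec3 x' y' z' \<longleftrightarrow> x = x' \<and> y = y' \<and> z = z'"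
  by (simp add: vec3_eq_iff)

lemma vec3_eq_0_iff [simp]: "vec3 x y z = 0 \<longleftrightarrow> x = 0 \<and> y = 0 \<and> z = 0"
  by (simp add: vec3_eq_iff)

lemma vec3_0 [simp]: "vec3 0 0 0 = 0"
  by simp

lemma inner_vec3: "inner (vec3 a b c) v = a * v$1 + b * v$2 + c * v$3"
  by (simp add: inner_vec_def sum_3)

section \<open>Lines near the x-axis\<close>

definition graph_line :: "real \<Rightarrow> real \<Rightarrow> real \<Rightarrow> real \<Rightarrow> (real^3) set" where
  "graph_line y0 dy z0 dz = line_of (vec3 0 y0 z0) (vec3 1 dy dz)"

lemma mem_graph_line_iff:
  "v \<in> graph_line y0 dy z0 dz \<longleftrightarrow> v$2 = y0 + v$1 * dy \<and> v$3 = z0 + v$1 * dz"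
proof
  assume "v \<in> graph_line y0 dy z0 dz"
  then obtain t where "v = vec3 0 y0 z0 + t *\<^sub>R vec3 1 dy dz"
    unfolding graph_line_def line_of_def by blast
  then show "v$2 = y0 + v$1 * dy \<and> v$3 = z0 + v$1 * dz" by simp
next
  assume "v$2 = y0 + v$1 * dy \<and> v$3 = z0 + v$1 * dz"
  then have "v = vec3 0 y0 z0 + v$1 *\<^sub>R vec3 1 dy dz" by (simp add: vec3_eq_iff)
  then show "v \<in> graph_line y0 dy z0 dz" unfolding graph_line_def line_of_def by blast
qed

lemma vec3_mem_graph_line: "vec3 x (y0 + x * dy) (z0 + x * dz) \<in> graph_line y0 dy z0 dz"
  by (simp add: mem_graph_line_iff)

lemma is_line_graph_line: "is_line (graph_line y0 dy z0 dz)"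
  unfolding is_line_def graph_line_def by (intro exI[of _ "vec3 0 y0 z0"] exI[of _ "vec3 1 dy dz"]) simp

lemma graph_line_eq_iff:
  "graph_line y0 dy z0 dz = graph_line y0' dy' z0' dz' \<longleftrightarrow> y0 = y0' \<and> dy = dy' \<and> z0 = z0' \<and> dz = dz'"
proof
  assume eq: "graph_line y0 dy z0 dz = graph_line y0' dy' z0' dz'"
  have "vec3 0 y0 z0 \<in> graph_line y0' dy' z0' dz'" "vec3 1 (y0 + dy) (z0 + dz) \<in> graph_line y0' dy' z0' dz'"
    using eq vec3_mem_graph_line[of 0 y0 dy z0 dz] vec3_mem_graph_line[of 1 y0 dy z0 dz] by simp_all
  then show "y0 = y0' \<and> dy = dy' \<and> z0 = z0' \<and> dz = dz'" by (simp add: mem_graph_line_iff)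
qed simp

lemma line_of_eq_graph_line:
  assumes "d$1 \<noteq> 0"
  shows "line_of p d = graph_line (p$2 - p$1 * (d$2 / d$1)) (d$2 / d$1) (p$3 - p$1 * (d$3 / d$1)) (d$3 / d$1)"
    (is "_ = graph_line ?y0 ?dy ?z0 ?dz")
proof (intro set_eqI iffI)
  fix v assume "v \<in> line_of p d"
  then obtain t where "v = p + t *\<^sub>R d" unfolding line_of_def by blast
  then show "v \<in> graph_line ?y0 ?dy ?z0 ?dz"
    using assms by (simp add: mem_graph_line_iff field_simps)
next
  fix v assume v: "v \<in> graph_line ?y0 ?dy ?z0 ?dz"
  define t where "t = (v$1 - p$1) / d$1"
  have "v$1 = p$1 + t * d$1" "v$2 = p$2 + t * d$2" "v$3 = p$3 + t * d$3"
    using v assms by (simp_all add: mem_graph_line_iff t_def algebra_simps diff_divide_distrib)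
  then have "v = p + t *\<^sub>R d" by (simp add: vec3_eq_iff)
  then show "v \<in> line_of p d" unfolding line_of_def by blast
qed

lemma line_of_eq_imp_parallel:
  assumes "line_of p d = line_of p' d'"
  shows "\<exists>c. d = c *\<^sub>R d'"
proof -
  have "p + t *\<^sub>R d \<in> line_of p' d'" for t
    unfolding assms[symmetric] by (auto simp: line_of_def)
  from this[of 0] this[of 1] have "p \<in> line_of p' d'" "p + d \<in> line_of p' d'" by simp_all
  then obtain s t where "p = p' + s *\<^sub>R d'" "p + d = p' + t *\<^sub>R d'"
    unfolding line_of_def by blast
  then have "d = (t - s) *\<^sub>R d'" by (simp add: algebra_simps)
  then show ?thesis by blast
qed

definition nonvertical_lines :: "(real^3) set set" where
  "nonvertical_lines = {graph_line y0 dy z0 dz | y0 dy z0 dz. True}"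

lemma line_of_in_nonvertical_lines: "d$1 \<noteq> 0 \<Longrightarrow> line_of p d \<in> nonvertical_lines"
  by (auto simp: nonvertical_lines_def line_of_eq_graph_line)

lemma line_of_in_nonvertical_lines_iff:
  assumes "d \<noteq> 0"
  shows "line_of p d \<in> nonvertical_lines \<longleftrightarrow> d$1 \<noteq> 0"
proof
  assume "line_of p d \<in> nonvertical_lines"
  then obtain y0 dy z0 dz where "line_of p d = line_of (vec3 0 y0 z0) (vec3 1 dy dz)"
    unfolding nonvertical_lines_def graph_line_def by blast
  then obtain c where "d = c *\<^sub>R vec3 1 dy dz" using line_of_eq_imp_parallel by blast
  with assms show "d$1 \<noteq> 0" by auto
qed (rule line_of_in_nonvertical_lines)

lemma open_lines_nonvertical_lines: "open_lines nonvertical_lines"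
proof -
  have "{(p, d). d \<noteq> 0 \<and> line_of p d \<in> nonvertical_lines} = {z. snd z $ 1 \<noteq> 0}"
    by (auto simp: line_of_in_nonvertical_lines_iff line_of_in_nonvertical_lines)
  moreover have "open {z :: (real^3) \<times> (real^3). snd z $ 1 \<noteq> 0}"
    by (rule open_Collect_neq) (auto intro!: continuous_intros)
  ultimately show ?thesis
    unfolding open_lines_def nonvertical_lines_def using is_line_graph_line by auto
qed

lemma eventually_perturbed_line_in:
  assumes "open_lines V" "d \<noteq> 0" "line_of p d \<in> V"
  shows "\<forall>\<^sub>F e in at 0. line_of (p + e *\<^sub>R p') (d + e *\<^sub>R d') \<in> V"
proof -
  let ?O = "{(p, d). d \<noteq> 0 \<and> line_of p d \<in> V}"
  have "((\<lambda>e. (p + e *\<^sub>R p', d + e *\<^sub>R d')) \<longlongrightarrow> (p + 0 *\<^sub>R p', d + 0 *\<^sub>R d')) (at 0)"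
    by (intro tendsto_intros)
  then have "((\<lambda>e. (p + e *\<^sub>R p', d + e *\<^sub>R d')) \<longlongrightarrow> (p, d)) (at 0)"
    by simp
  moreover have "open ?O" "(p, d) \<in> ?O" using assms unfolding open_lines_def by auto
  ultimately have "\<forall>\<^sub>F e in at 0. (p + e *\<^sub>R p', d + e *\<^sub>R d') \<in> ?O"
    by (rule topological_tendstoD)
  then show ?thesis by eventually_elim auto
qed

definition x_axis :: "(real^3) set" where
  "x_axis = graph_line 0 0 0 0"

lemma not_pins_x_axis:
  assumes meets: "\<And>e P. 0 < e \<Longrightarrow> e \<le> 1 \<Longrightarrow> P \<in> G \<Longrightarrow> graph_line (e * y0) (e * dy) (e * z0) (e * dz) \<inter> P \<noteq> {}"
    and nonzero: "\<not> (y0 = 0 \<and> dy = 0 \<and> z0 = 0 \<and> dz = 0)"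
  shows "\<not> pins G x_axis"
proof
  assume "pins G x_axis"
  then obtain V where V: "open_lines V" "x_axis \<in> V"
    and isolated: "\<forall>M\<in>V. line_transversal M G \<longrightarrow> M = x_axis"
    unfolding pins_def by blast
  have "\<forall>\<^sub>F e in at 0. line_of (0 + e *\<^sub>R vec3 0 y0 z0) (vec3 1 0 0 + e *\<^sub>R vec3 0 dy dz) \<in> V"
    using V by (intro eventually_perturbed_line_in) (auto simp: x_axis_def graph_line_def)
  then obtain r where "r > 0" and r: "\<And>e. e \<noteq> 0 \<Longrightarrow> dist e 0 < r \<Longrightarrow>
      line_of (0 + e *\<^sub>R vec3 0 y0 z0) (vec3 1 0 0 + e *\<^sub>R vec3 0 dy dz) \<in> V"
    unfolding eventually_at by blast
  define e where "e = min 1 (r / 2)"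
  have e: "0 < e" "e \<le> 1" "dist e 0 < r" using \<open>r > 0\<close> by (auto simp: e_def)
  then have "graph_line (e * y0) (e * dy) (e * z0) (e * dz) \<in> V"
    using r[of e] by (simp add: graph_line_def)
  moreover have "line_transversal (graph_line (e * y0) (e * dy) (e * z0) (e * dz)) G"
    using meets e(1,2) is_line_graph_line unfolding line_transversal_def by blast
  ultimately have "graph_line (e * y0) (e * dy) (e * z0) (e * dz) = x_axis"
    using isolated by blast
  with nonzero \<open>0 < e\<close> show False by (simp add: x_axis_def graph_line_eq_iff)
qed

lemma pins_mono:
  assumes "pins G L" "G \<subseteq> F" "line_transversal L F"
  shows "pins F L"
proof -
  obtain V where "open_lines V" "L \<in> V" "\<forall>M\<in>V. line_transversal M G \<longrightarrow> M = L"
    using assms(1) unfolding pins_def by blast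
  moreover have "line_transversal M G" if "line_transversal M F" for M
    using that assms(2) unfolding line_transversal_def by blast
  ultimately show ?thesis using assms(3) unfolding pins_def by blast
qed

lemma minimal_pinningI:
  assumes "pins F L" and remove: "\<And>P. P \<in> F \<Longrightarrow> \<not> pins (F - {P}) L"
  shows "minimal_pinning F L"
  unfolding minimal_pinning_def
proof (intro conjI allI impI notI assms(1))
  fix G assume "G \<subset> F" "pins G L"
  then obtain P where "P \<in> F" "G \<subseteq> F - {P}" by blast
  moreover have "line_transversal L (F - {P})"
    using \<open>pins F L\<close> unfolding pins_def line_transversal_def by blast
  ultimately show False using pins_mono[OF \<open>pins G L\<close>] remove by blast
qed

section \<open>Prisms over half-plane triangles\<close>

text \<open>The prism over \<open>[a, b]\<close> of the triangle with vertices \<open>C(-n2, n1)\<close>, \<open>C(n2, -n1)\<close>,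
  \<open>C(n1, n2)\<close> in the \<open>(y, z)\<close>-plane: the triangle lies in the half-plane \<open>n1 y + n2 z \<ge> 0\<close> and its
  first edge runs through the origin along the boundary line.\<close>

definition half_plane_prism :: "real \<Rightarrow> real \<Rightarrow> real \<Rightarrow> real \<Rightarrow> real \<Rightarrow> (real^3) set" where
  "half_plane_prism a b n1 n2 C = convex hull
     {vec3 a (- C * n2) (C * n1), vec3 a (C * n2) (- C * n1), vec3 a (C * n1) (C * n2),
      vec3 b (- C * n2) (C * n1), vec3 b (C * n2) (- C * n1), vec3 b (C * n1) (C * n2)}"

lemma half_plane_prism_subset:
  assumes "a \<le> b" "0 \<le> C"
  shows "half_plane_prism a b n1 n2 C \<subseteq> {v. a \<le> v$1 \<and> v$1 \<le> b \<and> 0 \<le> n1 * v$2 + n2 * v$3}"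
  unfolding half_plane_prism_def
proof (rule hull_minimal)
  have "{v::real^3. a \<le> v$1 \<and> v$1 \<le> b \<and> 0 \<le> n1 * v$2 + n2 * v$3} =
     {v. inner (vec3 1 0 0) v \<ge> a} \<inter> {v. inner (vec3 1 0 0) v \<le> b} \<inter> {v. inner (vec3 0 n1 n2) v \<ge> 0}"
    by (auto simp: inner_vec3)
  then show "convex {v::real^3. a \<le> v$1 \<and> v$1 \<le> b \<and> 0 \<le> n1 * v$2 + n2 * v$3}"
    by (simp add: convex_Int convex_halfspace_ge convex_halfspace_le)
  have "n1 * (- C * n2) + n2 * (C * n1) = 0" "n1 * (C * n2) + n2 * (- C * n1) = 0"
    by (simp_all add: algebra_simps)
  moreover have "n1 * (C * n1) + n2 * (C * n2) = C * (n1 * n1 + n2 * n2)"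
    by (simp add: algebra_simps)
  then have "0 \<le> n1 * (C * n1) + n2 * (C * n2)"
    using assms(2) by simp
  ultimately show "{vec3 a (- C * n2) (C * n1), vec3 a (C * n2) (- C * n1), vec3 a (C * n1) (C * n2),
      vec3 b (- C * n2) (C * n1), vec3 b (C * n2) (- C * n1), vec3 b (C * n1) (C * n2)}
    \<subseteq> {v. a \<le> v$1 \<and> v$1 \<le> b \<and> 0 \<le> n1 * v$2 + n2 * v$3}"
    using assms(1) by simp
qed

lemma vec3_mem_convex_hull_triangle:
  assumes "0 < C" "0 < n1\<^sup>2 + n2\<^sup>2" "0 \<le> n1 * y + n2 * z"
    and "n1 * y + n2 * z + \<bar>n1 * z - n2 * y\<bar> \<le> C * (n1\<^sup>2 + n2\<^sup>2)"
  shows "vec3 c y z \<in> convex hull {vec3 c (- C * n2) (C * n1), vec3 c (C * n2) (- C * n1), vec3 c (C * n1) (C * n2)}"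
proof -
  \<comment> \<open>In the coordinates \<open>u, w\<close> the triangle becomes \<open>0 \<le> u, u + \<bar>w\<bar> \<le> 1\<close>.\<close>
  define S where "S = C * (n1\<^sup>2 + n2\<^sup>2)"
  define u where "u = (n1 * y + n2 * z) / S"
  define w where "w = (n1 * z - n2 * y) / S"
  define \<alpha> where "\<alpha> = (1 - u + w) / 2"
  define \<beta> where "\<beta> = (1 - u - w) / 2"
  have S: "0 < S" using assms(1,2) by (simp add: S_def)
  have "u + \<bar>w\<bar> = (n1 * y + n2 * z + \<bar>n1 * z - n2 * y\<bar>) / S"
    using S by (simp add: u_def w_def abs_divide add_divide_distrib)
  also have "\<dots> \<le> 1" using assms(4) S by (simp add: S_def)
  finally have nonneg: "0 \<le> \<alpha>" "0 \<le> \<beta>" "0 \<le> u"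
    using assms(3) S by (auto simp: \<alpha>_def \<beta>_def u_def abs_le_iff)
  have sum: "\<alpha> + \<beta> + u = 1" and diff: "\<beta> - \<alpha> = - w" "\<alpha> - \<beta> = w"
    by (simp_all add: \<alpha>_def \<beta>_def field_simps)
  have yz: "C * (n1 * u - n2 * w) = y" "C * (n2 * u + n1 * w) = z"
  proof -
    have "n1 * (n1 * y + n2 * z) - n2 * (n1 * z - n2 * y) = (n1\<^sup>2 + n2\<^sup>2) * y"
      "n2 * (n1 * y + n2 * z) + n1 * (n1 * z - n2 * y) = (n1\<^sup>2 + n2\<^sup>2) * z"
      by (simp_all add: power2_eq_square algebra_simps)
    then have "n1 * u - n2 * w = (n1\<^sup>2 + n2\<^sup>2) * y / S" "n2 * u + n1 * w = (n1\<^sup>2 + n2\<^sup>2) * z / S"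
      unfolding u_def w_def
      by (simp_all only: times_divide_eq_right diff_divide_distrib[symmetric] add_divide_distrib[symmetric])
    moreover have "C * ((n1\<^sup>2 + n2\<^sup>2) * t / S) = t" for t
    proof -
      have "C * ((n1\<^sup>2 + n2\<^sup>2) * t / S) = S * t / S" by (simp add: S_def)
      also have "\<dots> = t" using S by simp
      finally show ?thesis .
    qed
    ultimately show "C * (n1 * u - n2 * w) = y" "C * (n2 * u + n1 * w) = z"
      by simp_all
  qed
  have "\<alpha> *\<^sub>R vec3 c (- C * n2) (C * n1) + \<beta> *\<^sub>R vec3 c (C * n2) (- C * n1) + u *\<^sub>R vec3 c (C * n1) (C * n2)
      = vec3 ((\<alpha> + \<beta> + u) * c) (C * (n2 * (\<beta> - \<alpha>) + n1 * u)) (C * (n1 * (\<alpha> - \<beta>) + n2 * u))"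
    by (simp add: algebra_simps)
  also have "\<dots> = vec3 c y z"
    unfolding sum diff yz[symmetric] by (simp add: algebra_simps)
  finally have "vec3 c y z = \<alpha> *\<^sub>R vec3 c (- C * n2) (C * n1) + \<beta> *\<^sub>R vec3 c (C * n2) (- C * n1)
      + u *\<^sub>R vec3 c (C * n1) (C * n2)" ..
  with nonneg sum show ?thesis unfolding convex_hull_3 by blast
qed

lemma vec3_mem_convex_between:
  assumes "convex K" "vec3 a y z \<in> K" "vec3 b y z \<in> K" "a \<le> x" "x \<le> b"
  shows "vec3 x y z \<in> K"
proof (cases "a = b")
  case True
  with assms show ?thesis by simp
next
  case False
  define u where "u = (x - a) / (b - a)"
  have "0 \<le> u" "u \<le> 1" using assms(4,5) False by (simp_all add: u_def field_simps)
  moreover have "(1 - u) * a + u * b = x"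
  proof -
    have "u * (b - a) = x - a" using False by (simp add: u_def)
    then show ?thesis by (simp add: algebra_simps)
  qed
  moreover have "(1 - u) * t + u * t = t" for t by (simp add: algebra_simps)
  ultimately show ?thesis using convexD_alt[OF assms(1-3), of u] by simp
qed

lemma abs_le_square:
  fixes t :: real
  assumes "1 \<le> \<bar>t\<bar>"
  shows "\<bar>t\<bar> \<le> t\<^sup>2"
proof -
  have "\<bar>t\<bar> * 1 \<le> \<bar>t\<bar> * \<bar>t\<bar>" using assms by (intro mult_left_mono) auto
  then show ?thesis by (simp add: power2_eq_square)
qed

lemma abs_le_one_plus_square: "\<bar>t\<bar> \<le> 1 + (t::real)\<^sup>2"
proof (cases "1 \<le> \<bar>t\<bar>")
  case True
  then show ?thesis using abs_le_square[of t] by linarith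
next
  case False
  then show ?thesis using zero_le_power2[of t] by linarith
qed

lemma half_plane_triangle_bound:
  fixes n1 n2 y z C :: real
  assumes "1 \<le> \<bar>n1\<bar> \<or> 1 \<le> \<bar>n2\<bar>" "2 * (\<bar>y\<bar> + \<bar>z\<bar>) \<le> C"
  shows "n1 * y + n2 * z + \<bar>n1 * z - n2 * y\<bar> \<le> C * (n1\<^sup>2 + n2\<^sup>2)"
proof -
  have "n1 * y \<le> \<bar>n1\<bar> * \<bar>y\<bar>" "n2 * z \<le> \<bar>n2\<bar> * \<bar>z\<bar>"
    by (simp_all add: abs_mult[symmetric])
  moreover have "\<bar>n1 * z - n2 * y\<bar> \<le> \<bar>n1\<bar> * \<bar>z\<bar> + \<bar>n2\<bar> * \<bar>y\<bar>"
    using abs_triangle_ineq4[of "n1 * z" "n2 * y"] by (simp add: abs_mult)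
  moreover have "(\<bar>n1\<bar> + \<bar>n2\<bar>) * (\<bar>y\<bar> + \<bar>z\<bar>) = \<bar>n1\<bar> * \<bar>y\<bar> + \<bar>n1\<bar> * \<bar>z\<bar> + \<bar>n2\<bar> * \<bar>y\<bar> + \<bar>n2\<bar> * \<bar>z\<bar>"
    by (simp add: algebra_simps)
  ultimately have "n1 * y + n2 * z + \<bar>n1 * z - n2 * y\<bar> \<le> (\<bar>n1\<bar> + \<bar>n2\<bar>) * (\<bar>y\<bar> + \<bar>z\<bar>)"
    by linarith
  also have "\<dots> \<le> (2 * (n1\<^sup>2 + n2\<^sup>2)) * (\<bar>y\<bar> + \<bar>z\<bar>)"
  proof (rule mult_right_mono)
    show "\<bar>n1\<bar> + \<bar>n2\<bar> \<le> 2 * (n1\<^sup>2 + n2\<^sup>2)"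
      using assms(1)
    proof
      assume "1 \<le> \<bar>n1\<bar>"
      with abs_le_square[OF this] abs_le_one_plus_square[of n2] zero_le_power2[of n2]
      show ?thesis by (smt (verit))
    next
      assume "1 \<le> \<bar>n2\<bar>"
      with abs_le_square[OF this] abs_le_one_plus_square[of n1] zero_le_power2[of n1]
      show ?thesis by (smt (verit))
    qed
  qed simp
  also have "\<dots> = (n1\<^sup>2 + n2\<^sup>2) * (2 * (\<bar>y\<bar> + \<bar>z\<bar>))" by (simp add: algebra_simps)
  also have "\<dots> \<le> (n1\<^sup>2 + n2\<^sup>2) * C" using assms(2) by (intro mult_left_mono) auto
  finally show ?thesis by (simp add: mult.commute)
qed

lemma mem_half_plane_prism:
  assumes "a \<le> x" "x \<le> b" "0 < C" "1 \<le> \<bar>n1\<bar> \<or> 1 \<le> \<bar>n2\<bar>"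
    and "0 \<le> n1 * y + n2 * z" "2 * (\<bar>y\<bar> + \<bar>z\<bar>) \<le> C"
  shows "vec3 x y z \<in> half_plane_prism a b n1 n2 C"
proof (rule vec3_mem_convex_between[OF _ _ _ assms(1,2)])
  have "0 < n1\<^sup>2 + n2\<^sup>2" using assms(4) by (auto intro: add_pos_nonneg add_nonneg_pos)
  then have "vec3 c y z \<in> convex hull {vec3 c (- C * n2) (C * n1), vec3 c (C * n2) (- C * n1), vec3 c (C * n1) (C * n2)}" for c
    using vec3_mem_convex_hull_triangle assms(3,5) half_plane_triangle_bound[OF assms(4,6)] by blast
  moreover have "convex hull {vec3 c (- C * n2) (C * n1), vec3 c (C * n2) (- C * n1), vec3 c (C * n1) (C * n2)}
      \<subseteq> half_plane_prism a b n1 n2 C" if "c = a \<or> c = b" for c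
    unfolding half_plane_prism_def using that by (intro hull_mono) auto
  ultimately show "vec3 a y z \<in> half_plane_prism a b n1 n2 C" "vec3 b y z \<in> half_plane_prism a b n1 n2 C"
    by blast+
qed (simp add: half_plane_prism_def convex_convex_hull)

lemma graph_line_meets_half_plane_prism:
  assumes "a \<le> x" "x \<le> b" "0 < C" "1 \<le> \<bar>n1\<bar> \<or> 1 \<le> \<bar>n2\<bar>"
    and "0 \<le> n1 * (y0 + x * dy) + n2 * (z0 + x * dz)" "2 * (\<bar>y0 + x * dy\<bar> + \<bar>z0 + x * dz\<bar>) \<le> C"
  shows "graph_line y0 dy z0 dz \<inter> half_plane_prism a b n1 n2 C \<noteq> {}"
  using mem_half_plane_prism[OF assms] vec3_mem_graph_line by blast

lemma scaled_graph_line_meets_half_plane_prism: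
  assumes "0 < e" "e \<le> 1" "a \<le> x" "x \<le> b" "0 < C" "1 \<le> \<bar>n1\<bar> \<or> 1 \<le> \<bar>n2\<bar>"
    and "y0 + x * dy = y" "z0 + x * dz = z" "0 \<le> n1 * y + n2 * z" "2 * (\<bar>y\<bar> + \<bar>z\<bar>) \<le> C"
  shows "graph_line (e * y0) (e * dy) (e * z0) (e * dz) \<inter> half_plane_prism a b n1 n2 C \<noteq> {}"
proof (rule graph_line_meets_half_plane_prism[OF assms(3-6)])
  have scale: "e * y0 + x * (e * dy) = e * y" "e * z0 + x * (e * dz) = e * z"
    unfolding assms(7,8)[symmetric] by (simp_all add: algebra_simps)
  have "n1 * (e * y) + n2 * (e * z) = e * (n1 * y + n2 * z)"
    by (simp add: algebra_simps)
  then show "0 \<le> n1 * (e * y0 + x * (e * dy)) + n2 * (e * z0 + x * (e * dz))"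
    unfolding scale using assms(1,9) by simp
  have "2 * (\<bar>e * y\<bar> + \<bar>e * z\<bar>) = e * (2 * (\<bar>y\<bar> + \<bar>z\<bar>))"
    using assms(1) by (simp add: abs_mult algebra_simps)
  also have "\<dots> \<le> 2 * (\<bar>y\<bar> + \<bar>z\<bar>)"
    by (rule mult_left_le_one_le) (use assms(1,2) in auto)
  also have "\<dots> \<le> C" by (fact assms(10))
  finally show "2 * (\<bar>e * y0 + x * (e * dy)\<bar> + \<bar>e * z0 + x * (e * dz)\<bar>) \<le> C"
    unfolding scale .
qed

lemma graph_line_meets_half_plane_prism_imp:
  assumes "graph_line y0 dy z0 dz \<inter> half_plane_prism a b n1 n2 C \<noteq> {}" "a \<le> b" "0 \<le> C"
  shows "0 \<le> n1 * (y0 + a * dy) + n2 * (z0 + a * dz) \<or> 0 \<le> n1 * (y0 + b * dy) + n2 * (z0 + b * dz)"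
proof -
  define f where "f t = n1 * (y0 + t * dy) + n2 * (z0 + t * dz)" for t
  obtain v where vL: "v \<in> graph_line y0 dy z0 dz" and vP: "v \<in> half_plane_prism a b n1 n2 C"
    using assms(1) by blast
  have "a \<le> v$1" "v$1 \<le> b" "0 \<le> n1 * v$2 + n2 * v$3"
    using subsetD[OF half_plane_prism_subset[OF assms(2,3)] vP] by auto
  moreover have "v$2 = y0 + v$1 * dy" "v$3 = z0 + v$1 * dz"
    using vL by (simp_all add: mem_graph_line_iff)
  ultimately have v: "a \<le> v$1" "v$1 \<le> b" "0 \<le> f (v$1)" by (simp_all add: f_def)
  have slope: "f s - f t = (s - t) * (n1 * dy + n2 * dz)" for s t
    by (simp add: f_def algebra_simps)
  have "f (v$1) \<le> f a \<or> f (v$1) \<le> f b"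
  proof (cases "0 \<le> n1 * dy + n2 * dz")
    case True
    with v(2) have "0 \<le> (b - v$1) * (n1 * dy + n2 * dz)" by simp
    then show ?thesis using slope[of b "v$1"] by linarith
  next
    case False
    with v(1) have "0 \<le> (a - v$1) * (n1 * dy + n2 * dz)" by (simp add: mult_nonpos_nonpos)
    then show ?thesis using slope[of a "v$1"] by linarith
  qed
  with v(3) show ?thesis unfolding f_def by linarith
qed

lemma x_axis_meets_half_plane_prism:
  assumes "a \<le> b" "0 < C" "1 \<le> \<bar>n1\<bar> \<or> 1 \<le> \<bar>n2\<bar>"
  shows "x_axis \<inter> half_plane_prism a b n1 n2 C \<noteq> {}"
  using graph_line_meets_half_plane_prism[of a a b C n1 n2 0 0 0 0] assms by (simp add: x_axis_def)

lemma closed_segment_symmetric: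
  fixes p v :: "'a::real_vector"
  assumes "0 \<le> C"
  shows "closed_segment (p - C *\<^sub>R v) (p + C *\<^sub>R v) = {p + t *\<^sub>R v | t. \<bar>t\<bar> \<le> C}"
proof -
  have along: "(1 - u) *\<^sub>R (p - C *\<^sub>R v) + u *\<^sub>R (p + C *\<^sub>R v) = p + ((2 * u - 1) * C) *\<^sub>R v" for u
    by (simp add: algebra_simps flip: scaleR_add_left)
  show ?thesis
  proof (intro set_eqI iffI)
    fix x assume "x \<in> closed_segment (p - C *\<^sub>R v) (p + C *\<^sub>R v)"
    then obtain u where u: "0 \<le> u" "u \<le> 1" "x = p + ((2 * u - 1) * C) *\<^sub>R v"
      unfolding closed_segment_def along by blast
    have "\<bar>2 * u - 1\<bar> \<le> 1" using u by auto
    then have "\<bar>2 * u - 1\<bar> * C \<le> C" using assms by (metis mult.commute mult_left_le)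
    then have "\<bar>(2 * u - 1) * C\<bar> \<le> C" using assms by (simp add: abs_mult)
    with u show "x \<in> {p + t *\<^sub>R v | t. \<bar>t\<bar> \<le> C}" by blast
  next
    fix x assume "x \<in> {p + t *\<^sub>R v | t. \<bar>t\<bar> \<le> C}"
    then obtain t where t: "\<bar>t\<bar> \<le> C" "x = p + t *\<^sub>R v" by blast
    show "x \<in> closed_segment (p - C *\<^sub>R v) (p + C *\<^sub>R v)"
    proof (cases "C = 0")
      case True
      with t show ?thesis by simp
    next
      case False
      define u where "u = (t / C + 1) / 2"
      have "0 \<le> u" "u \<le> 1" using t assms False by (auto simp: u_def field_simps abs_le_iff)
      moreover have "(2 * u - 1) * C = t" using False by (simp add: u_def field_simps)
      then have "x = p + ((2 * u - 1) * C) *\<^sub>R v" using t by simp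
      ultimately show ?thesis unfolding closed_segment_def along by blast
    qed
  qed
qed

definition segment_z :: "real \<Rightarrow> (real^3) set" where
  "segment_z C = closed_segment (vec3 0 0 (- C)) (vec3 0 0 C)"

definition segment_y :: "real \<Rightarrow> (real^3) set" where
  "segment_y C = closed_segment (vec3 1 (- C) 0) (vec3 1 C 0)"

lemma graph_line_meets_segment_z_iff:
  assumes "0 \<le> C"
  shows "graph_line y0 dy z0 dz \<inter> segment_z C \<noteq> {} \<longleftrightarrow> y0 = 0 \<and> \<bar>z0\<bar> \<le> C"
proof -
  have "segment_z C = {vec3 0 0 t | t. \<bar>t\<bar> \<le> C}"
    unfolding segment_z_def
    using closed_segment_symmetric[OF assms, of 0 "vec3 0 0 1"] by simp
  then show ?thesis by (force simp: mem_graph_line_iff)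
qed

lemma graph_line_meets_segment_y_iff:
  assumes "0 \<le> C"
  shows "graph_line y0 dy z0 dz \<inter> segment_y C \<noteq> {} \<longleftrightarrow> z0 + dz = 0 \<and> \<bar>y0 + dy\<bar> \<le> C"
proof -
  have "segment_y C = {vec3 1 t 0 | t. \<bar>t\<bar> \<le> C}"
    unfolding segment_y_def
    using closed_segment_symmetric[OF assms, of "vec3 1 0 0" "vec3 0 1 0"] by simp
  then show ?thesis by (force simp: mem_graph_line_iff)
qed

lemma abs_scale_le:
  fixes e t C :: real
  assumes "0 < e" "e \<le> 1" "\<bar>t\<bar> \<le> C"
  shows "\<bar>e * t\<bar> \<le> C"
proof -
  have "\<bar>e * t\<bar> = e * \<bar>t\<bar>" using assms(1) by (simp add: abs_mult abs_of_pos)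
  also have "\<dots> \<le> \<bar>t\<bar>" by (rule mult_left_le_one_le) (use assms(1,2) in auto)
  finally show ?thesis using assms(3) by linarith
qed

lemma scaled_graph_line_meets_segment_z:
  assumes "0 < e" "e \<le> 1" "y0 = 0" "\<bar>z0\<bar> \<le> C"
  shows "graph_line (e * y0) (e * dy) (e * z0) (e * dz) \<inter> segment_z C \<noteq> {}"
  using assms abs_scale_le[OF assms(1,2,4)] graph_line_meets_segment_z_iff[of C] by simp

lemma scaled_graph_line_meets_segment_y:
  assumes "0 < e" "e \<le> 1" "z0 + dz = 0" "\<bar>y0 + dy\<bar> \<le> C"
  shows "graph_line (e * y0) (e * dy) (e * z0) (e * dz) \<inter> segment_y C \<noteq> {}"
proof -
  have "e * z0 + e * dz = 0" "\<bar>e * y0 + e * dy\<bar> \<le> C"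
    using assms abs_scale_le[OF assms(1,2,4)] by (simp_all add: distrib_left[symmetric])
  moreover have "0 \<le> C" using assms(4) by linarith
  ultimately show ?thesis using graph_line_meets_segment_y_iff by blast
qed

section \<open>The pinning family\<close>

definition pinning_family :: "nat \<Rightarrow> real \<Rightarrow> (real^3) set set" where
  "pinning_family N C =
     {segment_z C, segment_y C, half_plane_prism 2 3 0 1 C, half_plane_prism (1/3) (1/2) 1 1 C,
      half_plane_prism (1/2) 2 (-1) (2 * real N) C}
   \<union> (\<lambda>k. half_plane_prism (- real k) (real k) (-1) (real k) C) ` {1..N}"

lemma pinning_family_cases [consumes 1, case_names segment_z segment_y prism_z prism_yz prism_N prism_k]:
  assumes "P \<in> pinning_family N C"
  obtains "P = segment_z C" | "P = segment_y C" | "P = half_plane_prism 2 3 0 1 C"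
    | "P = half_plane_prism (1/3) (1/2) 1 1 C" | "P = half_plane_prism (1/2) 2 (-1) (2 * real N) C"
    | k where "k \<in> {1..N}" "P = half_plane_prism (- real k) (real k) (-1) (real k) C"
  using assms unfolding pinning_family_def by blast

lemma slopes_vanish:
  fixes N :: nat and dy dz :: real
  assumes "0 \<le> dz" "dz \<le> dy" "dy \<le> N * dz"
    and gaps: "\<forall>k\<in>{1..N}. dy \<le> (real k - 1) * dz \<or> (real k + 1) * dz \<le> dy"
  shows "dz = 0"
proof (rule ccontr)
  assume "dz \<noteq> 0"
  with assms(1) have dz: "0 < dz" by simp
  define q where "q = dy / dz"
  define k where "k = nat \<lfloor>q\<rfloor>"
  have "1 \<le> q" "q \<le> N" using assms(2,3) dz by (simp_all add: q_def field_simps)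
  then have k: "k \<in> {1..N}" "real k \<le> q" "q < real k + 1"
    by (auto simp: k_def le_nat_floor) linarith+
  with gaps have "q * dz \<le> (real k - 1) * dz \<or> (real k + 1) * dz \<le> q * dz"
    using dz by (simp add: q_def)
  with k dz show False by (auto simp: mult_le_cancel_right)
qed

lemma pinning_family_transversal_eq_x_axis:
  assumes "0 \<le> C" "line_transversal (graph_line y0 dy z0 dz) (pinning_family N C)"
  shows "graph_line y0 dy z0 dz = x_axis"
proof -
  have meets: "graph_line y0 dy z0 dz \<inter> P \<noteq> {}" if "P \<in> pinning_family N C" for P
    using assms(2) that unfolding line_transversal_def by blast
  have prism: "0 \<le> n1 * (y0 + a * dy) + n2 * (z0 + a * dz) \<or> 0 \<le> n1 * (y0 + b * dy) + n2 * (z0 + b * dz)"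
    if "half_plane_prism a b n1 n2 C \<in> pinning_family N C" "a \<le> b" for a b n1 n2
    using graph_line_meets_half_plane_prism_imp[OF meets[OF that(1)] that(2) assms(1)] .
  have y0: "y0 = 0"
    using meets[of "segment_z C"] graph_line_meets_segment_z_iff[OF assms(1)] by (simp add: pinning_family_def)
  have z0: "z0 = - dz"
    using meets[of "segment_y C"] graph_line_meets_segment_y_iff[OF assms(1)] by (simp add: pinning_family_def)
  have "0 \<le> dz"
    using prism[of 2 3 0 1] by (auto simp: pinning_family_def y0 z0)
  moreover have "dz \<le> dy"
    using prism[of "1/3" "1/2" 1 1] \<open>0 \<le> dz\<close> by (auto simp: pinning_family_def y0 z0)
  moreover have "dy \<le> N * dz"
  proof -
    have "dy \<le> - (dz * (real N * 2)) \<or> dy \<le> dz * real N"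
      using prism[of "1/2" 2 "-1" "2 * real N"] by (auto simp: pinning_family_def y0 z0 algebra_simps)
    then show ?thesis
    proof
      assume "dy \<le> - (dz * (real N * 2))"
      moreover have "0 \<le> dz * (real N * 2)" using \<open>0 \<le> dz\<close> by simp
      ultimately have "dy \<le> 0" by linarith
      with \<open>0 \<le> dz\<close> \<open>dz \<le> dy\<close> have "dz = 0" by linarith
      with \<open>dy \<le> 0\<close> show ?thesis by simp
    qed (simp add: mult.commute)
  qed
  moreover have "\<forall>k\<in>{1..N}. dy \<le> (real k - 1) * dz \<or> (real k + 1) * dz \<le> dy"
  proof
    fix k assume k: "k \<in> {1..N}"
    then have "0 \<le> real k * (dy - (real k + 1) * dz) \<or> 0 \<le> real k * ((real k - 1) * dz - dy)"
      using prism[of "- real k" "real k" "-1" "real k"] by (auto simp: pinning_family_def y0 z0 algebra_simps)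
    with k show "dy \<le> (real k - 1) * dz \<or> (real k + 1) * dz \<le> dy"
      by (auto simp: zero_le_mult_iff)
  qed
  ultimately have "dz = 0" by (rule slopes_vanish)
  with \<open>dz \<le> dy\<close> \<open>dy \<le> N * dz\<close> have "dy = 0" by simp
  with \<open>dz = 0\<close> show ?thesis by (simp add: x_axis_def y0 z0)
qed

lemma x_axis_transversal_pinning_family:
  assumes "0 < C"
  shows "line_transversal x_axis (pinning_family N C)"
  unfolding line_transversal_def
proof (intro conjI ballI)
  show "is_line x_axis" by (simp add: x_axis_def is_line_graph_line)
  fix P assume "P \<in> pinning_family N C"
  then show "x_axis \<inter> P \<noteq> {}"
  proof (cases rule: pinning_family_cases)
    case (prism_k k)
    then show ?thesis using x_axis_meets_half_plane_prism assms by simp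
  qed (use assms x_axis_meets_half_plane_prism in \<open>auto simp: x_axis_def
      graph_line_meets_segment_z_iff graph_line_meets_segment_y_iff\<close>)
qed

lemma pins_pinning_family:
  assumes "0 < C"
  shows "pins (pinning_family N C) x_axis"
  unfolding pins_def
proof (intro conjI exI[of _ nonvertical_lines])
  show "line_transversal x_axis (pinning_family N C)"
    using assms by (rule x_axis_transversal_pinning_family)
  show "open_lines nonvertical_lines" by (rule open_lines_nonvertical_lines)
  show "x_axis \<in> nonvertical_lines" by (auto simp: x_axis_def nonvertical_lines_def)
  show "\<forall>M\<in>nonvertical_lines. line_transversal M (pinning_family N C) \<longrightarrow> M = x_axis"
  proof (intro ballI impI)
    fix M assume "M \<in> nonvertical_lines" "line_transversal M (pinning_family N C)"
    moreover obtain y0 dy z0 dz where "M = graph_line y0 dy z0 dz"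
      using \<open>M \<in> nonvertical_lines\<close> unfolding nonvertical_lines_def by blast
    ultimately show "M = x_axis"
      using pinning_family_transversal_eq_x_axis[of C] assms by simp
  qed
qed

text \<open>The radius bound keeps all points used by the witness lines below inside the triangles.\<close>

context
  fixes N :: nat and C :: real
  assumes N: "1 \<le> N" and radius: "2 * (real N + 1)\<^sup>2 \<le> C"
begin

lemma radius_bound: "j \<le> N \<Longrightarrow> k \<le> N \<Longrightarrow> 2 * ((real j + 1) * (real k + 1)) \<le> C"
proof -
  assume "j \<le> N" "k \<le> N"
  then have "(real j + 1) * (real k + 1) \<le> (real N + 1) * (real N + 1)" by (intro mult_mono) auto
  with radius show ?thesis by (simp add: power2_eq_square)
qed

lemma radius_ge_8: "8 \<le> C"
  using radius_bound[of 1 1] N by simp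

lemma meets_pinning_family_except_segment_z:
  assumes "0 < e" "e \<le> 1" "Q \<in> pinning_family N C" "Q \<noteq> segment_z C"
  shows "graph_line (e * 1) (e * - 1) (e * 0) (e * 0) \<inter> Q \<noteq> {}"
  using assms(3)
proof (cases rule: pinning_family_cases)
  case segment_y
  show ?thesis unfolding segment_y
    by (rule scaled_graph_line_meets_segment_y[OF assms(1,2)]) (use radius_ge_8 in simp_all)
next
  case prism_z
  show ?thesis unfolding prism_z
    by (rule scaled_graph_line_meets_half_plane_prism[OF assms(1,2), where x = 2 and y = "-1" and z = 0])
      (use radius_ge_8 in simp_all)
next
  case prism_yz
  show ?thesis unfolding prism_yz
    by (rule scaled_graph_line_meets_half_plane_prism[OF assms(1,2), where x = "1/2" and y = "1/2" and z = 0])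
      (use radius_ge_8 in simp_all)
next
  case prism_N
  show ?thesis unfolding prism_N
    by (rule scaled_graph_line_meets_half_plane_prism[OF assms(1,2), where x = 1 and y = 0 and z = 0])
      (use radius_ge_8 in simp_all)
next
  case (prism_k k)
  show ?thesis unfolding prism_k(2)
    by (rule scaled_graph_line_meets_half_plane_prism[OF assms(1,2), where x = 1 and y = 0 and z = 0])
      (use radius_ge_8 prism_k(1) in simp_all)
qed (use assms(4) in simp)

lemma meets_pinning_family_except_segment_y:
  assumes "0 < e" "e \<le> 1" "Q \<in> pinning_family N C" "Q \<noteq> segment_y C"
  shows "graph_line (e * 0) (e * 0) (e * 0) (e * 1) \<inter> Q \<noteq> {}"
  using assms(3)
proof (cases rule: pinning_family_cases)
  case segment_z
  show ?thesis unfolding segment_z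
    by (rule scaled_graph_line_meets_segment_z[OF assms(1,2)]) (use radius_ge_8 in simp_all)
next
  case prism_z
  show ?thesis unfolding prism_z
    by (rule scaled_graph_line_meets_half_plane_prism[OF assms(1,2), where x = 2 and y = 0 and z = 2])
      (use radius_ge_8 in simp_all)
next
  case prism_yz
  show ?thesis unfolding prism_yz
    by (rule scaled_graph_line_meets_half_plane_prism[OF assms(1,2), where x = "1/2" and y = 0 and z = "1/2"])
      (use radius_ge_8 in simp_all)
next
  case prism_N
  show ?thesis unfolding prism_N
    by (rule scaled_graph_line_meets_half_plane_prism[OF assms(1,2), where x = 2 and y = 0 and z = 2])
      (use radius_ge_8 in simp_all)
next
  case (prism_k k)
  show ?thesis unfolding prism_k(2)
    by (rule scaled_graph_line_meets_half_plane_prism[OF assms(1,2), where x = 0 and y = 0 and z = 0])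
      (use radius_ge_8 prism_k(1) in simp_all)
qed (use assms(4) in simp)

lemma meets_pinning_family_except_prism_z:
  assumes "0 < e" "e \<le> 1" "Q \<in> pinning_family N C" "Q \<noteq> half_plane_prism 2 3 0 1 C"
  shows "graph_line (e * 0) (e * 0) (e * 1) (e * - 1) \<inter> Q \<noteq> {}"
  using assms(3)
proof (cases rule: pinning_family_cases)
  case segment_z
  show ?thesis unfolding segment_z
    by (rule scaled_graph_line_meets_segment_z[OF assms(1,2)]) (use radius_ge_8 in simp_all)
next
  case segment_y
  show ?thesis unfolding segment_y
    by (rule scaled_graph_line_meets_segment_y[OF assms(1,2)]) (use radius_ge_8 in simp_all)
next
  case prism_yz
  show ?thesis unfolding prism_yz
    by (rule scaled_graph_line_meets_half_plane_prism[OF assms(1,2), where x = "1/2" and y = 0 and z = "1/2"])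
      (use radius_ge_8 in simp_all)
next
  case prism_N
  show ?thesis unfolding prism_N
    by (rule scaled_graph_line_meets_half_plane_prism[OF assms(1,2), where x = 1 and y = 0 and z = 0])
      (use radius_ge_8 in simp_all)
next
  case (prism_k k)
  show ?thesis unfolding prism_k(2)
    by (rule scaled_graph_line_meets_half_plane_prism[OF assms(1,2), where x = 1 and y = 0 and z = 0])
      (use radius_ge_8 prism_k(1) in simp_all)
qed (use assms(4) in simp)

lemma meets_pinning_family_except_prism_yz:
  assumes "0 < e" "e \<le> 1" "Q \<in> pinning_family N C" "Q \<noteq> half_plane_prism (1/3) (1/2) 1 1 C"
  shows "graph_line (e * 0) (e * - 1) (e * 0) (e * 0) \<inter> Q \<noteq> {}"
  using assms(3)
proof (cases rule: pinning_family_cases)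
  case segment_z
  show ?thesis unfolding segment_z
    by (rule scaled_graph_line_meets_segment_z[OF assms(1,2)]) (use radius_ge_8 in simp_all)
next
  case segment_y
  show ?thesis unfolding segment_y
    by (rule scaled_graph_line_meets_segment_y[OF assms(1,2)]) (use radius_ge_8 in simp_all)
next
  case prism_z
  show ?thesis unfolding prism_z
    by (rule scaled_graph_line_meets_half_plane_prism[OF assms(1,2), where x = 2 and y = "-2" and z = 0])
      (use radius_ge_8 in simp_all)
next
  case prism_N
  show ?thesis unfolding prism_N
    by (rule scaled_graph_line_meets_half_plane_prism[OF assms(1,2), where x = 2 and y = "-2" and z = 0])
      (use radius_ge_8 in simp_all)
next
  case (prism_k k)
  show ?thesis unfolding prism_k(2)
    by (rule scaled_graph_line_meets_half_plane_prism[OF assms(1,2), where x = 0 and y = 0 and z = 0])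
      (use radius_ge_8 prism_k(1) in simp_all)
qed (use assms(4) in simp)

lemma meets_pinning_family_except_prism_N:
  assumes "0 < e" "e \<le> 1" "Q \<in> pinning_family N C" "Q \<noteq> half_plane_prism (1/2) 2 (-1) (2 * real N) C"
  shows "graph_line (e * 0) (e * 1) (e * 0) (e * 0) \<inter> Q \<noteq> {}"
  using assms(3)
proof (cases rule: pinning_family_cases)
  case segment_z
  show ?thesis unfolding segment_z
    by (rule scaled_graph_line_meets_segment_z[OF assms(1,2)]) (use radius_ge_8 in simp_all)
next
  case segment_y
  show ?thesis unfolding segment_y
    by (rule scaled_graph_line_meets_segment_y[OF assms(1,2)]) (use radius_ge_8 in simp_all)
next
  case prism_z
  show ?thesis unfolding prism_z
    by (rule scaled_graph_line_meets_half_plane_prism[OF assms(1,2), where x = 2 and y = 2 and z = 0])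
      (use radius_ge_8 in simp_all)
next
  case prism_yz
  show ?thesis unfolding prism_yz
    by (rule scaled_graph_line_meets_half_plane_prism[OF assms(1,2), where x = "1/2" and y = "1/2" and z = 0])
      (use radius_ge_8 in simp_all)
next
  case (prism_k k)
  show ?thesis unfolding prism_k(2)
    by (rule scaled_graph_line_meets_half_plane_prism[OF assms(1,2), where x = 0 and y = 0 and z = 0])
      (use radius_ge_8 prism_k(1) in simp_all)
qed (use assms(4) in simp)

lemma meets_pinning_family_except_prism_k:
  assumes "0 < e" "e \<le> 1" "Q \<in> pinning_family N C" "k \<in> {1..N}"
    and "Q \<noteq> half_plane_prism (- real k) (real k) (-1) (real k) C"
  shows "graph_line (e * 0) (e * real k) (e * - 1) (e * 1) \<inter> Q \<noteq> {}"
proof -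
  have k: "1 \<le> real k" "real k \<le> real N" using assms(4) by auto
  have bound_k: "2 * (2 * real k + 1) \<le> C" using radius_bound[of 1 k] assms(4) N by simp
  from assms(3) show ?thesis
  proof (cases rule: pinning_family_cases)
    case segment_z
    show ?thesis unfolding segment_z
      by (rule scaled_graph_line_meets_segment_z[OF assms(1,2)]) (use radius_ge_8 in simp_all)
  next
    case segment_y
    show ?thesis unfolding segment_y
      by (rule scaled_graph_line_meets_segment_y[OF assms(1,2)]) (use bound_k in simp_all)
  next
    case prism_z
    show ?thesis unfolding prism_z
      by (rule scaled_graph_line_meets_half_plane_prism[OF assms(1,2), where x = 2 and y = "2 * real k" and z = 1])
        (use radius_ge_8 k bound_k in simp_all)
  next
    case prism_yz
    show ?thesis unfolding prism_yz
      by (rule scaled_graph_line_meets_half_plane_prism[OF assms(1,2), where x = "1/2" and y = "real k / 2" and z = "-1/2"])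
        (use k bound_k in simp_all)
  next
    case prism_N
    show ?thesis unfolding prism_N
      by (rule scaled_graph_line_meets_half_plane_prism[OF assms(1,2), where x = 2 and y = "2 * real k" and z = 1])
        (use k bound_k in simp_all)
  next
    case (prism_k j)
    have j: "1 \<le> real j" "real j \<le> real N" using prism_k(1) by auto
    have bound_jk: "2 * (real j * real k + real j + 1) \<le> C"
      using radius_bound[of j k] prism_k(1) assms(4) by (simp add: algebra_simps)
    consider "k < j" | "j < k" using prism_k(2) assms(5) by fastforce
    then show ?thesis
    proof cases
      case 1
      then have "0 \<le> real j * (real j - 1 - real k)" using k by simp
      then show ?thesis unfolding prism_k(2)
        by (rule_tac scaled_graph_line_meets_half_plane_prism[OF assms(1,2), where x = "real j"
            and y = "real j * real k" and z = "real j - 1"])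
          (use j k bound_jk radius_ge_8 in \<open>simp_all add: algebra_simps\<close>)
    next
      case 2
      then have "0 \<le> real j * (real k - 1 - real j)" using j by simp
      then show ?thesis unfolding prism_k(2)
        by (rule_tac scaled_graph_line_meets_half_plane_prism[OF assms(1,2), where x = "- real j"
            and y = "- (real j * real k)" and z = "- real j - 1"])
          (use j k bound_jk radius_ge_8 in \<open>simp_all add: algebra_simps\<close>)
    qed
  qed
qed

lemma not_pins_pinning_family_minus:
  assumes "P \<in> pinning_family N C"
  shows "\<not> pins (pinning_family N C - {P}) x_axis"
  using assms
proof (cases rule: pinning_family_cases)
  case segment_z
  show ?thesis
    by (rule not_pins_x_axis[of _ 1 "-1" 0 0]) (use segment_z meets_pinning_family_except_segment_z in auto)
next
  case segment_y
  show ?thesis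
    by (rule not_pins_x_axis[of _ 0 0 0 1]) (use segment_y meets_pinning_family_except_segment_y in auto)
next
  case prism_z
  show ?thesis
    by (rule not_pins_x_axis[of _ 0 0 1 "-1"]) (use prism_z meets_pinning_family_except_prism_z in auto)
next
  case prism_yz
  show ?thesis
    by (rule not_pins_x_axis[of _ 0 "-1" 0 0]) (use prism_yz meets_pinning_family_except_prism_yz in auto)
next
  case prism_N
  show ?thesis
    by (rule not_pins_x_axis[of _ 0 1 0 0]) (use prism_N meets_pinning_family_except_prism_N in auto)
next
  case (prism_k k)
  show ?thesis
    by (rule not_pins_x_axis[of _ 0 "real k" "-1" 1]) (use prism_k meets_pinning_family_except_prism_k in auto)
qed

lemma minimal_pinning_pinning_family: "minimal_pinning (pinning_family N C) x_axis"
  using pins_pinning_family radius_ge_8 not_pins_pinning_family_minus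
  by (intro minimal_pinningI) auto

end

lemma card_pinning_family:
  assumes "0 < C"
  shows "N \<le> card (pinning_family N C)"
proof -
  let ?prism = "\<lambda>k. half_plane_prism (- real k) (real k) (-1) (real k) C"
  have sub: "?prism j \<subseteq> {v. v$1 \<le> real j}" for j
    using half_plane_prism_subset[of "- real j" "real j" C "-1" "real j"] assms by auto
  have mem: "vec3 (real k) 0 0 \<in> ?prism k" if "1 \<le> k" for k
    using mem_half_plane_prism[of "- real k" "real k" "real k" C "-1" "real k" 0 0] assms that by simp
  have "inj_on ?prism {1..N}"
  proof (rule inj_onI)
    have le: "real k \<le> real j" if "k \<in> {1..N}" "?prism j = ?prism k" for j k
      using sub[of j] mem[of k] that by auto
    fix j k assume "j \<in> {1..N}" "k \<in> {1..N}" "?prism j = ?prism k"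
    with le[of k j] le[of j k] show "j = k" by simp
  qed
  then have "N = card (?prism ` {1..N})" by (simp add: card_image)
  also have "\<dots> \<le> card (pinning_family N C)"
    by (intro card_mono) (auto simp: pinning_family_def)
  finally show ?thesis .
qed

lemma polytope_pinning_family:
  assumes "P \<in> pinning_family N C"
  shows "polytope P"
  using assms
  by (cases rule: pinning_family_cases)
    (simp_all add: segment_z_def segment_y_def half_plane_prism_def segment_convex_hull polytope_convex_hull)

theorem theorem3:
  fixes n :: nat
  assumes "n > 0"
  shows "\<exists>L F. is_line L \<and> finite F \<and> card F \<ge> n \<and>
           (\<forall>P\<in>F. polytope P \<and> convex P) \<and> minimal_pinning F L"
proof -
  define C where "C = 2 * (real n + 1)\<^sup>2"
  have "0 < C" by (simp add: C_def)
  have "is_line x_axis" by (simp add: x_axis_def is_line_graph_line)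
  moreover have "finite (pinning_family n C)" by (simp add: pinning_family_def)
  moreover have "n \<le> card (pinning_family n C)"
    using \<open>0 < C\<close> by (rule card_pinning_family)
  moreover have "\<forall>P\<in>pinning_family n C. polytope P \<and> convex P"
    using polytope_pinning_family polytope_imp_convex by blast
  moreover have "minimal_pinning (pinning_family n C) x_axis"
    using assms by (intro minimal_pinning_pinning_family) (simp_all add: C_def)
  ultimately show ?thesis by blast
qed

end
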